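(* Assume the balanced case $\beta_0=C$, $A>0$ and $B^2=4AC$, and let $r=-B/(2A)$, so $Ax^2+Bx+C=A(x-r)^2$. Then \[ w(x,t)=\exp\bigl[(\alpha_0r+\gamma_0)t\bigr]\bigl(1-At(x-r)\bigr)^{-\alpha_0/A} \] whenever $1-At(x-r)\neq0$ (principal branch, as an identity of analytic functions near $t=0$).
   Context: Fix nonnegative integers $a,b,c,\alpha_0,\beta_0,\gamma_0$, $\alpha_k=ak+\alpha_0$, $\beta_k=bk+\beta_0$, $\gamma_k=ck+\gamma_0$; $w_{0,0}=1$, $w_{n,k}=0$ for $k<0$ or $k>n$, $w_{n+1,k}=\alpha_{k-1}w_{n,k-1}+\gamma_k w_{n,k}+\beta_k w_{n,k+1}$. $A=a$, $B=c$, $C=b$; balanced means $\beta_0=C$. $P_n(x)=\sum_k w_{n,k}x^k$, $w(x,t)=\sum_{n\ge0}P_n(x)t^n/n!$. *)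

theory Defs
  imports "HOL-Analysis.Analysis"
begin

fun wnk :: "nat \<Rightarrow> nat \<Rightarrow> nat \<Rightarrow> nat \<Rightarrow> nat \<Rightarrow> nat \<Rightarrow> nat \<Rightarrow> int \<Rightarrow> int" where
  "wnk a b c al0 be0 ga0 0 k = (if k = 0 then 1 else 0)"
| "wnk a b c al0 be0 ga0 (Suc n) k =
     (if k < 0 \<or> k > int (Suc n) then 0
      else (int a * (k - 1) + int al0) * wnk a b c al0 be0 ga0 n (k - 1)
         + (int c * k + int ga0) * wnk a b c al0 be0 ga0 n k
         + (int b * k + int be0) * wnk a b c al0 be0 ga0 n (k + 1))"

definition Ppoly :: "nat \<Rightarrow> nat \<Rightarrow> nat \<Rightarrow> nat \<Rightarrow> nat \<Rightarrow> nat \<Rightarrow> nat \<Rightarrow> complex \<Rightarrow> complex" where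
  "Ppoly a b c al0 be0 ga0 n x = (\<Sum>k\<le>n. of_int (wnk a b c al0 be0 ga0 n (int k)) * x ^ k)"

end

theory Submission
  imports Defs "HOL-Computational_Algebra.Polynomial"
begin

text \<open>In the balanced case the recurrence for w(n,k) is the coefficientwise form of
  P(n+1) = (A x^2 + B x + C) P(n)' + (alpha0 x + gamma0) P(n), P(0) = 1: balance makes
  beta(k) = C (k + 1), the factor produced by differentiating x^(k+1).
  If B^2 = 4AC the quadratic is A (x - r)^2, and in the variable u = x - r the operator becomes
  A u^2 d/du + alpha0 u + lambda with lambda = alpha0 r + gamma0. Its iterates are the binomial
  convolutions P(n) = sum_m C(n,m) lambda^(n-m) A^m (alpha0/A)_m u^m with rising factorials
  (alpha0/A)_m, so the exponential generating function is e^(lambda t) times the binomial series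
  sum_m (alpha0/A)_m (A t u)^m / m! = (1 - A t u) powr (-alpha0/A), which converges for |A t u| < 1.\<close>

lemma poly_eq_sum_coeff_atMost:
  fixes p :: "'a::comm_semiring_1 poly"
  assumes "degree p \<le> n"
  shows "poly p x = (\<Sum>k\<le>n. coeff p k * x ^ k)"
  unfolding poly_altdef
  by (rule sum.mono_neutral_left) (use assms in \<open>auto simp: coeff_eq_0\<close>)

lemma quadratic_eq_smult_square:
  fixes A B C r :: "'a::field_char_0"
  assumes "A \<noteq> 0" "B ^ 2 = 4 * A * C" "r = - B / (2 * A)"
  shows "[:C, B, A:] = smult A ([:- r, 1:] ^ 2)"
proof -
  have B: "B = - 2 * A * r"
    using assms(1,3) by (simp add: field_simps)
  then have "B ^ 2 = 4 * A * (A * r ^ 2)"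
    by (simp add: power2_eq_square)
  with assms(1,2) have C: "C = A * r ^ 2"
    by simp
  show ?thesis unfolding B C by (simp add: power2_eq_square algebra_simps)
qed

lemma prod_arith_progression_eq_pochhammer:
  fixes A l :: "'a::field_char_0"
  assumes "A \<noteq> 0"
  shows "(\<Prod>j<m. l + of_nat j * A) = A ^ m * pochhammer (l / A) m"
  by (induction m) (simp_all add: pochhammer_Suc assms field_simps)

lemma sums_pochhammer_powr:
  fixes s z :: complex
  assumes "norm z < 1"
  shows "(\<lambda>m. pochhammer s m * z ^ m / fact m) sums (1 - z) powr (- s)"
proof -
  have "((- s) gchoose m) * (- z) ^ m = pochhammer s m * z ^ m / fact m" for m
    by (simp add: gbinomial_pochhammer power_minus')
  with gen_binomial_complex[of "- z" "- s"] assms show ?thesis by simp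
qed

lemma summable_norm_pochhammer_series:
  fixes s z :: complex
  assumes "norm z < 1"
  shows "summable (\<lambda>m. norm (pochhammer s m * z ^ m / fact m))"
proof -
  have "ereal (norm (- z)) < conv_radius (\<lambda>m. (- s) gchoose m)"
    using assms by (simp add: conv_radius_gchoose one_ereal_def)
  from abs_summable_in_conv_radius[OF this] show ?thesis
    by (simp add: gbinomial_pochhammer power_minus' norm_mult norm_divide norm_power)
qed

lemma sums_exp_mult_binomial_convolution:
  fixes c :: "nat \<Rightarrow> 'a::{real_normed_field,banach}"
  assumes "summable (\<lambda>m. norm (c m * t ^ m / fact m))" and "(\<lambda>m. c m * t ^ m / fact m) sums S"
  shows "(\<lambda>n. (\<Sum>m\<le>n. of_nat (n choose m) * l ^ (n - m) * c m) * t ^ n / fact n)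
           sums (exp (l * t) * S)"
proof -
  have "(\<lambda>n. \<Sum>m\<le>n. c m * t ^ m / fact m * ((l * t) ^ (n - m) /\<^sub>R fact (n - m)))
          sums ((\<Sum>m. c m * t ^ m / fact m) * (\<Sum>n. (l * t) ^ n /\<^sub>R fact n))"
    by (rule Cauchy_product_sums[OF assms(1) summable_norm_exp])
  also have "(\<Sum>m. c m * t ^ m / fact m) * (\<Sum>n. (l * t) ^ n /\<^sub>R fact n) = S * exp (l * t)"
    using assms(2) exp_converges[of "l * t"] by (simp add: sums_iff)
  finally have conv: "(\<lambda>n. \<Sum>m\<le>n. c m * t ^ m / fact m * ((l * t) ^ (n - m) /\<^sub>R fact (n - m)))
          sums (exp (l * t) * S)"
    by (simp only: mult.commute)
  have "c m * t ^ m / fact m * ((l * t) ^ (n - m) /\<^sub>R fact (n - m))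
      = of_nat (n choose m) * l ^ (n - m) * c m * t ^ n / fact n" if "m \<le> n" for m n
  proof -
    have "t ^ n = t ^ m * t ^ (n - m)" using that by (simp flip: power_add)
    then show ?thesis
      by (simp add: binomial_fact[OF that] scaleR_conv_of_real field_simps power_mult_distrib)
  qed
  then have "(\<Sum>m\<le>n. c m * t ^ m / fact m * ((l * t) ^ (n - m) /\<^sub>R fact (n - m)))
      = (\<Sum>m\<le>n. of_nat (n choose m) * l ^ (n - m) * c m) * t ^ n / fact n" for n
    unfolding sum_distrib_right sum_divide_distrib by (intro sum.cong) auto
  with conv show ?thesis by simp
qed

primrec diff_op_poly :: "'a::idom poly \<Rightarrow> 'a poly \<Rightarrow> nat \<Rightarrow> 'a poly" where
  "diff_op_poly Q L 0 = 1"
| "diff_op_poly Q L (Suc n) = Q * pderiv (diff_op_poly Q L n) + L * diff_op_poly Q L n"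

lemma coeff_quadratic_pderiv_linear_0:
  "coeff ([:q0, q1, q2:] * pderiv p + [:l0, l1:] * p) 0 = q0 * coeff p 1 + l0 * coeff p 0"
  by (simp add: coeff_pderiv)

lemma coeff_quadratic_pderiv_linear_Suc:
  fixes p :: "'a::idom poly"
  shows "coeff ([:q0, q1, q2:] * pderiv p + [:l0, l1:] * p) (Suc k) =
     (q2 * of_nat k + l1) * coeff p k + (q1 * of_nat (Suc k) + l0) * coeff p (Suc k)
     + q0 * of_nat (Suc (Suc k)) * coeff p (Suc (Suc k))"
  by (cases k) (simp_all add: coeff_pderiv algebra_simps)

lemma degree_diff_op_poly_le: "degree (diff_op_poly [:q0, q1, q2:] [:l0, l1:] n) \<le> n"
proof (induction n)
  case (Suc n)
  show ?case
  proof (rule degree_le, intro allI impI)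
    fix i assume "Suc n < i"
    then obtain k where "i = Suc k" "n < k" by (cases i) auto
    with Suc.IH show "coeff (diff_op_poly [:q0, q1, q2:] [:l0, l1:] (Suc n)) i = 0"
      by (simp only: diff_op_poly.simps coeff_quadratic_pderiv_linear_Suc) (simp add: coeff_eq_0)
  qed
qed simp

lemma pcompose_diff_op_poly:
  assumes "pderiv h = 1"
  shows "pcompose (diff_op_poly Q L n) h = diff_op_poly (pcompose Q h) (pcompose L h) n"
proof (induction n)
  case (Suc n)
  have "pcompose (pderiv (diff_op_poly Q L n)) h = pderiv (pcompose (diff_op_poly Q L n) h)"
    by (simp add: pderiv_pcompose assms)
  with Suc.IH show ?case
    by (simp add: pcompose_add pcompose_mult)
qed (simp add: pcompose_1)

lemma coeff_diff_op_poly_square: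
  "coeff (diff_op_poly [:0, 0, A:] [:l0, l1:] n) m
     = of_nat (n choose m) * l0 ^ (n - m) * (\<Prod>j<m. l1 + of_nat j * A)"
proof (induction n arbitrary: m)
  case (Suc n)
  show ?case
  proof (cases m)
    case 0
    with Suc.IH show ?thesis
      by (simp only: diff_op_poly.simps coeff_quadratic_pderiv_linear_0) simp
  next
    case (Suc j)
    then have "coeff (diff_op_poly [:0, 0, A:] [:l0, l1:] (Suc n)) m
        = (A * of_nat j + l1) * coeff (diff_op_poly [:0, 0, A:] [:l0, l1:] n) j
          + l0 * coeff (diff_op_poly [:0, 0, A:] [:l0, l1:] n) (Suc j)"
      by (simp only: diff_op_poly.simps coeff_quadratic_pderiv_linear_Suc) simp
    also have "\<dots> = of_nat (Suc n choose m) * l0 ^ (Suc n - m) * (\<Prod>j<m. l1 + of_nat j * A)"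
    proof (cases "j < n")
      case True
      then have "l0 ^ (n - j) = l0 * l0 ^ (n - Suc j)"
        by (simp flip: power_Suc add: Suc_diff_Suc)
      with True show ?thesis
        unfolding Suc.IH \<open>m = Suc j\<close> by (simp add: algebra_simps)
    next
      case False
      then show ?thesis
        unfolding Suc.IH \<open>m = Suc j\<close> by (simp add: binomial_eq_0 algebra_simps)
    qed
    finally show ?thesis .
  qed
qed (simp add: coeff_1 binomial_eq_0)

lemma poly_diff_op_poly_square:
  fixes A l0 l1 r x :: "'a::idom"
  shows "poly (diff_op_poly (smult A ([:- r, 1:] ^ 2)) [:l0, l1:] n) x
     = (\<Sum>m\<le>n. of_nat (n choose m) * (l1 * r + l0) ^ (n - m) * (\<Prod>j<m. l1 + of_nat j * A)
                   * (x - r) ^ m)"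
proof -
  let ?h = "[:- r, 1:]"
  have Q: "smult A (?h ^ 2) = pcompose [:0, 0, A:] ?h"
    by (simp add: pcompose_pCons power2_eq_square algebra_simps)
  have L: "[:l0, l1:] = pcompose [:l1 * r + l0, l1:] ?h"
    by (simp add: pcompose_pCons algebra_simps)
  have "poly (diff_op_poly (smult A (?h ^ 2)) [:l0, l1:] n) x
      = poly (diff_op_poly [:0, 0, A:] [:l1 * r + l0, l1:] n) (x - r)"
    unfolding Q L by (simp add: pcompose_diff_op_poly[symmetric] pderiv_pCons poly_pcompose)
  also have "\<dots> = (\<Sum>m\<le>n. of_nat (n choose m) * (l1 * r + l0) ^ (n - m)
                   * (\<Prod>j<m. l1 + of_nat j * A) * (x - r) ^ m)"
    by (simp add: poly_eq_sum_coeff_atMost[OF degree_diff_op_poly_le] coeff_diff_op_poly_square)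
  finally show ?thesis .
qed

lemma wnk_eq_0: "k < 0 \<or> k > int n \<Longrightarrow> wnk a b c al0 be0 ga0 n k = 0"
  by (cases n) auto

lemma coeff_diff_op_poly_eq_wnk:
  "coeff (diff_op_poly [:of_nat b, of_nat c, of_nat a:] [:of_nat ga, of_nat al:] n) k
     = (of_int (wnk a b c al b ga n (int k)) :: 'a::idom)"
proof (induction n arbitrary: k)
  case (Suc n)
  show ?case
  proof (cases k)
    case 0
    have "int 0 + 1 = int 1" by simp
    with Suc.IH \<open>k = 0\<close> show ?thesis
      by (simp only: diff_op_poly.simps coeff_quadratic_pderiv_linear_0 wnk.simps)
        (simp add: wnk_eq_0)
  next
    case (Suc j)
    have shift: "int (Suc j) - 1 = int j" "int (Suc j) + 1 = int (Suc (Suc j))" by simp_all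
    show ?thesis
    proof (cases "j > n")
      case True
      with Suc.IH \<open>k = Suc j\<close> show ?thesis
        by (simp only: diff_op_poly.simps coeff_quadratic_pderiv_linear_Suc) (simp add: wnk_eq_0)
    next
      case False
      with Suc.IH \<open>k = Suc j\<close> show ?thesis
        by (simp only: diff_op_poly.simps coeff_quadratic_pderiv_linear_Suc wnk.simps shift)
          (simp add: algebra_simps)
    qed
  qed
qed (simp add: coeff_1)

lemma Ppoly_balanced_eq_poly_diff_op_poly:
  "Ppoly a b c al b ga n x
     = poly (diff_op_poly [:of_nat b, of_nat c, of_nat a:] [:of_nat ga, of_nat al:] n) x"
  unfolding Ppoly_def poly_eq_sum_coeff_atMost[OF degree_diff_op_poly_le]
  by (simp add: coeff_diff_op_poly_eq_wnk)

lemma Ppoly_balanced_double_root: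
  fixes x r :: complex
  assumes "a > 0" and "c ^ 2 = 4 * a * b" and "r = - of_nat c / (2 * of_nat a)"
  shows "Ppoly a b c al b ga n x
     = (\<Sum>m\<le>n. of_nat (n choose m) * (of_nat al * r + of_nat ga) ^ (n - m)
                 * (pochhammer (of_nat al / of_nat a) m * (of_nat a * (x - r)) ^ m))"
proof -
  have "of_nat c ^ 2 = 4 * of_nat a * (of_nat b :: complex)"
    by (metis assms(2) of_nat_mult of_nat_numeral of_nat_power)
  then have "[:of_nat b, of_nat c, of_nat a:] = smult (of_nat a) ([:- r, 1:] ^ 2)"
    using assms(1,3) by (intro quadratic_eq_smult_square) simp_all
  with assms(1) show ?thesis
    unfolding Ppoly_balanced_eq_poly_diff_op_poly
    by (simp add: poly_diff_op_poly_square prod_arith_progression_eq_pochhammer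
        power_mult_distrib mult_ac)
qed

lemma sums_exp_mult_pochhammer_convolution:
  fixes s l t v :: complex
  assumes "norm (t * v) < 1"
  shows "(\<lambda>n. (\<Sum>m\<le>n. of_nat (n choose m) * l ^ (n - m) * (pochhammer s m * v ^ m)) * t ^ n / fact n)
           sums (exp (l * t) * (1 - t * v) powr (- s))"
proof -
  have c: "pochhammer s m * v ^ m * t ^ m / fact m = pochhammer s m * (t * v) ^ m / fact m" for m
    by (simp add: power_mult_distrib mult_ac)
  show ?thesis
    using sums_pochhammer_powr[OF assms, of s] summable_norm_pochhammer_series[OF assms, of s]
    by (intro sums_exp_mult_binomial_convolution) (simp_all only: c)
qed

theorem mainTheorem8:
  fixes a b c al0 be0 ga0 :: nat and x :: complex
  assumes balanced: "be0 = b"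
    and Apos: "a > 0"
    and disc: "c ^ 2 = 4 * a * b"
  defines "r \<equiv> - of_nat c / (2 * of_nat a) :: complex"
  shows "\<exists>\<epsilon>>0. \<forall>t::complex. norm t < \<epsilon> \<longrightarrow>
           ((\<lambda>n. Ppoly a b c al0 be0 ga0 n x * t ^ n / fact n) sums
             (exp ((of_nat al0 * r + of_nat ga0) * t)
              * (1 - of_nat a * t * (x - r)) powr (- (of_nat al0 / of_nat a))))"
proof -
  define v where "v = of_nat a * (x - r)"
  define \<epsilon> where "\<epsilon> = 1 / (norm v + 1)"
  show ?thesis
  proof (intro exI[of _ \<epsilon>] conjI allI impI)
    show "\<epsilon> > 0"
      unfolding \<epsilon>_def by (simp add: add_nonneg_pos)
    fix t :: complex
    assume "norm t < \<epsilon>"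
    then have "norm t * (norm v + 1) < 1"
      unfolding \<epsilon>_def by (simp add: pos_less_divide_eq add_nonneg_pos)
    then have small: "norm (t * v) < 1"
      by (simp add: norm_mult distrib_left) (use norm_ge_zero[of t] in linarith)
    have tv: "of_nat a * t * (x - r) = t * v"
      unfolding v_def by simp
    show "(\<lambda>n. Ppoly a b c al0 be0 ga0 n x * t ^ n / fact n) sums
        (exp ((of_nat al0 * r + of_nat ga0) * t)
         * (1 - of_nat a * t * (x - r)) powr (- (of_nat al0 / of_nat a)))"
      unfolding balanced Ppoly_balanced_double_root[OF Apos disc r_def[THEN meta_eq_to_obj_eq]]
        v_def[symmetric] tv
      by (rule sums_exp_mult_pochhammer_convolution[OF small])
  qed
qed

end
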